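(* There exists $n_0$ such that for all $n\ge n_0$ the following holds. Let $\mathcal{H} = (X,\mathcal{F})$ be a hypergraph with $|X|=n$ and $|\mathcal{F}|\leq n^{\log(n)}$ such that every hyperedge contains at least $\log^3(n)$ vertices. Then in the Waiter-Client game on $\mathcal{H}$, Waiter has a strategy such that at the end of the game the set $C$ of Client's elements satisfies $|C\cap f| \geq \frac{|f|}{100}$ for every $f\in \mathcal{F}$.
   Context: Waiter-Client game on a hypergraph $(X,\mathcal{F})$: in each round Waiter offers Client two previously unclaimed elements of $X$; Client keeps one and the other goes to Waiter; if in the final round only one unclaimed element remains, it goes to Waiter. The game ends when all elements are claimed. *)

theory Defs
  imports Complex_Main
begin

text \<open>A position is given by the set U of unclaimed elements
and the set C of elements claimed so far by Client (Waiter's elements are irrelevant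
for the goal). waiter_wins P U C holds iff Waiter has a strategy guaranteeing that
Client's final set satisfies P. While at least two elements are unclaimed, Waiter
must offer two distinct unclaimed elements a, b; Client keeps either one, the other
goes to Waiter. When at most one element remains, it goes to Waiter and the game ends.\<close>

inductive waiter_wins :: "('a set \<Rightarrow> bool) \<Rightarrow> 'a set \<Rightarrow> 'a set \<Rightarrow> bool"
  for P :: "'a set \<Rightarrow> bool" where
  game_end: "finite U \<Longrightarrow> card U \<le> 1 \<Longrightarrow> P C \<Longrightarrow> waiter_wins P U C"
| offer: "a \<in> U \<Longrightarrow> b \<in> U \<Longrightarrow> a \<noteq> b
          \<Longrightarrow> waiter_wins P (U - {a, b}) (insert a C)
          \<Longrightarrow> waiter_wins P (U - {a, b}) (insert b C)
          \<Longrightarrow> waiter_wins P U C"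

end

theory Submission
  imports Defs
begin

text \<open>Waiter plays an Erdos-Selfridge type potential strategy. A hyperedge f weighs
(3/2)^w (1/2)^c, where w and c count the elements of f owned by Waiter and by Client. If
Client keeps a and Waiter gets b, the total weight Phi grows by at most half the difference
between the weights of the hyperedges through b and through a. These vertex weights lie in
[0, Phi], so by pigeonhole two of the m unclaimed elements have vertex weights within
2 Phi/(m - 1); offering them, Phi (m + 1) never increases and stays below |F| (n + 1).
A hyperedge on which Client ends with fewer than |f|/100 elements would alone weigh about
exp(|f|/5), more than n^(ln n) (n + 1) once |f| \<ge> ln^3 n and ln n \<ge> 8.\<close>

lemma waiter_wins_by_potential:
  fixes \<Psi> :: "'a set \<Rightarrow> 'a set \<Rightarrow> real"
  assumes offer_step: "\<And>U C. finite U \<Longrightarrow> C \<inter> U = {} \<Longrightarrow> 2 \<le> card U \<Longrightarrow>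
      \<exists>a\<in>U. \<exists>b\<in>U. a \<noteq> b \<and> \<Psi> (U - {a, b}) (insert a C) \<le> \<Psi> U C
                          \<and> \<Psi> (U - {a, b}) (insert b C) \<le> \<Psi> U C"
    and end_game: "\<And>U C. finite U \<Longrightarrow> C \<inter> U = {} \<Longrightarrow> card U \<le> 1 \<Longrightarrow> \<Psi> U C \<le> K \<Longrightarrow> P C"
  shows "finite U \<Longrightarrow> C \<inter> U = {} \<Longrightarrow> \<Psi> U C \<le> K \<Longrightarrow> waiter_wins P U C"
proof (induction "card U" arbitrary: U C rule: less_induct)
  case less
  show ?case
  proof (cases "card U \<le> 1")
    case True
    then show ?thesis using less.prems by (intro game_end end_game)
  next
    case False
    then obtain a b where ab: "a \<in> U" "b \<in> U" "a \<noteq> b"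
      and le_a: "\<Psi> (U - {a, b}) (insert a C) \<le> \<Psi> U C"
      and le_b: "\<Psi> (U - {a, b}) (insert b C) \<le> \<Psi> U C"
      using offer_step[OF less.prems(1,2)] by fastforce
    have smaller: "card (U - {a, b}) < card U"
      using ab less.prems(1) by (intro psubset_card_mono) auto
    show ?thesis
    proof (rule offer[OF ab])
      show "waiter_wins P (U - {a, b}) (insert a C)"
        using less.prems le_a by (intro less.hyps[OF smaller]) auto
      show "waiter_wins P (U - {a, b}) (insert b C)"
        using less.prems le_b by (intro less.hyps[OF smaller]) auto
    qed
  qed
qed

lemma exists_close_pair:
  fixes D :: "'a \<Rightarrow> real"
  assumes two: "2 \<le> card U" and bounds: "\<And>x. x \<in> U \<Longrightarrow> 0 \<le> D x \<and> D x \<le> M"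
  shows "\<exists>a\<in>U. \<exists>b\<in>U. a \<noteq> b \<and> \<bar>D a - D b\<bar> \<le> 2 * M / (real (card U) - 1)"
proof -
  define m where "m = card U"
  have m_pos: "0 < real m - 1" using two by (simp add: m_def)
  obtain x0 where "x0 \<in> U" using two by fastforce
  then have M_nonneg: "0 \<le> M" using bounds by force
  define s where "s = (real m - 1) / (2 * M)"
  define t where "t x = D x * s" for x
  have t_bounds: "0 \<le> t x \<and> t x < real m - 1" if "x \<in> U" for x
  proof -
    have "t x \<le> M * s"
      unfolding t_def s_def using bounds[OF that] m_pos M_nonneg by (intro mult_right_mono) auto
    also have "\<dots> < real m - 1" using M_nonneg m_pos by (cases "M = 0") (auto simp: s_def)
    finally show ?thesis using bounds[OF that] m_pos M_nonneg by (simp add: t_def s_def)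
  qed
  have "(\<lambda>x. nat \<lfloor>t x\<rfloor>) ` U \<subseteq> {0..<m - 1}"
    using t_bounds two by (auto simp: m_def floor_less_iff of_nat_diff nat_less_iff)
  then have "card ((\<lambda>x. nat \<lfloor>t x\<rfloor>) ` U) \<le> m - 1"
    by (metis card_atLeastLessThan card_mono diff_zero finite_atLeastLessThan)
  then have "card ((\<lambda>x. nat \<lfloor>t x\<rfloor>) ` U) < card U"
    using two unfolding m_def by linarith
  then obtain a b where ab: "a \<in> U" "b \<in> U" "a \<noteq> b" "nat \<lfloor>t a\<rfloor> = nat \<lfloor>t b\<rfloor>"
    using pigeonhole unfolding inj_on_def by blast
  have "\<lfloor>t a\<rfloor> = \<lfloor>t b\<rfloor>" using ab t_bounds by (metis nat_eq_iff2 zero_le_floor)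
  then have "\<bar>t a - t b\<bar> < 1" by linarith
  moreover have "\<bar>t a - t b\<bar> = \<bar>D a - D b\<bar> * s"
    using m_pos M_nonneg unfolding t_def s_def
    by (simp add: abs_mult flip: left_diff_distrib times_divide_eq_right)
  ultimately have "M \<noteq> 0 \<Longrightarrow> \<bar>D a - D b\<bar> < 2 * M / (real m - 1)"
    using m_pos M_nonneg by (simp add: s_def field_simps)
  moreover have "D a = D b" if "M = 0" using that bounds[OF ab(1)] bounds[OF ab(2)] by linarith
  ultimately show ?thesis using ab unfolding m_def by (cases "M = 0") fastforce+
qed

text \<open>Positions record only the unclaimed set U and Client's set C, so Waiter's part of a
hyperedge f is f - U - C.\<close>

definition weight :: "'a set \<Rightarrow> 'a set \<Rightarrow> 'a set \<Rightarrow> real" where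
  "weight U C f = (3/2) ^ card (f - U - C) * (1/2) ^ card (f \<inter> C)"

definition potential :: "'a set set \<Rightarrow> 'a set \<Rightarrow> 'a set \<Rightarrow> real" where
  "potential F U C = (\<Sum>f\<in>F. weight U C f)"

definition vertex_potential :: "'a set set \<Rightarrow> 'a set \<Rightarrow> 'a set \<Rightarrow> 'a \<Rightarrow> real" where
  "vertex_potential F U C x = (\<Sum>f\<in>{f\<in>F. x \<in> f}. weight U C f)"

definition scaled_potential :: "'a set set \<Rightarrow> 'a set \<Rightarrow> 'a set \<Rightarrow> real" where
  "scaled_potential F U C = potential F U C * (real (card U) + 1)"

lemma weight_pos: "0 < weight U C f"
  by (simp add: weight_def)

lemma potential_nonneg: "0 \<le> potential F U C"
  unfolding potential_def by (intro sum_nonneg) (simp add: less_imp_le weight_pos)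

lemma weight_le_potential: "finite F \<Longrightarrow> f \<in> F \<Longrightarrow> weight U C f \<le> potential F U C"
  unfolding potential_def by (intro member_le_sum) (auto simp: less_imp_le weight_pos)

lemma weight_le_scaled_potential: "finite F \<Longrightarrow> f \<in> F \<Longrightarrow> weight U C f \<le> scaled_potential F U C"
  using weight_le_potential[of F f U C] potential_nonneg[of F U C]
  unfolding scaled_potential_def by (simp add: mult_le_cancel_left1 order_trans)

lemma vertex_potential_bounds:
  "finite F \<Longrightarrow> 0 \<le> vertex_potential F U C x \<and> vertex_potential F U C x \<le> potential F U C"
  unfolding vertex_potential_def potential_def
  by (auto simp: less_imp_le weight_pos intro: sum_nonneg sum_mono2)

lemma potential_start: "(\<And>f. f \<in> F \<Longrightarrow> f \<subseteq> X) \<Longrightarrow> potential F X {} = real (card F)"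
  by (simp add: potential_def weight_def Diff_eq_empty_iff[THEN iffD2])

lemma weight_offer_le:
  assumes "a \<in> U" "b \<in> U" "a \<noteq> b" "C \<inter> U = {}" "finite f"
  shows "weight (U - {a, b}) (insert a C) f \<le>
         weight U C f - (if a \<in> f then weight U C f / 2 else 0) + (if b \<in> f then weight U C f / 2 else 0)"
proof -
  define w where "w = card (f - U - C)"
  define c where "c = card (f \<inter> C)"
  have "f - (U - {a, b}) - insert a C = (f - U - C) \<union> ({b} \<inter> f)" "b \<notin> f - U - C"
    using assms by auto
  then have waiter: "card (f - (U - {a, b}) - insert a C) = w + (if b \<in> f then 1 else 0)"
    unfolding w_def using assms(5) by (auto simp: insert_absorb)
  have "f \<inter> insert a C = (f \<inter> C) \<union> ({a} \<inter> f)" "a \<notin> f \<inter> C"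
    using assms by auto
  then have client: "card (f \<inter> insert a C) = c + (if a \<in> f then 1 else 0)"
    unfolding c_def using assms(5) by auto
  have "0 < (3/2::real) ^ w * (1/2) ^ c" by simp
  then show ?thesis
    unfolding weight_def waiter client w_def [symmetric] c_def [symmetric]
    by (cases "a \<in> f"; cases "b \<in> f"; simp add: field_simps)
qed

lemma potential_offer_le:
  assumes "a \<in> U" "b \<in> U" "a \<noteq> b" "C \<inter> U = {}" "finite F" "\<And>f. f \<in> F \<Longrightarrow> finite f"
  shows "potential F (U - {a, b}) (insert a C)
         \<le> potential F U C + (vertex_potential F U C b - vertex_potential F U C a) / 2"
proof -
  have "potential F (U - {a, b}) (insert a C) \<le>
     (\<Sum>f\<in>F. weight U C f - (if a \<in> f then weight U C f / 2 else 0) + (if b \<in> f then weight U C f / 2 else 0))"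
    unfolding potential_def using assms by (intro sum_mono weight_offer_le) auto
  also have "\<dots> = potential F U C + (vertex_potential F U C b - vertex_potential F U C a) / 2"
    unfolding potential_def vertex_potential_def using assms(5)
    by (simp add: sum.distrib sum_subtractf sum.inter_filter diff_divide_distrib sum_divide_distrib
        if_distrib[of "\<lambda>x. x / 2"] cong: if_cong)
  finally show ?thesis .
qed

lemma exists_offer_scaled_potential_le:
  assumes F: "finite F" "\<And>f. f \<in> F \<Longrightarrow> finite f"
    and U: "finite U" "C \<inter> U = {}" "2 \<le> card U"
  shows "\<exists>a\<in>U. \<exists>b\<in>U. a \<noteq> b
           \<and> scaled_potential F (U - {a, b}) (insert a C) \<le> scaled_potential F U C
           \<and> scaled_potential F (U - {a, b}) (insert b C) \<le> scaled_potential F U C"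
proof -
  define m where "m = card U"
  define P where "P = potential F U C"
  define D where "D = vertex_potential F U C"
  obtain a b where ab: "a \<in> U" "b \<in> U" "a \<noteq> b"
    and "\<bar>D a - D b\<bar> \<le> 2 * P / (real m - 1)"
    using exists_close_pair[OF U(3), of D P] vertex_potential_bounds[OF F(1)]
    unfolding D_def P_def m_def by blast
  then have close: "(D a - D b) / 2 \<le> P / (real m - 1)" "(D b - D a) / 2 \<le> P / (real m - 1)"
    by (simp_all add: abs_le_iff mult.commute)
  have m_pos: "0 < real m - 1" using U(3) by (simp add: m_def)
  have "card (U - {a, b}) = m - 2" using ab U(1) by (simp add: m_def card_Diff_subset)
  then have card_rest: "real (card (U - {a, b})) + 1 = real m - 1"
    using U(3) unfolding m_def by (simp add: of_nat_diff)
  have scaled_le: "scaled_potential F (U - {a, b}) C' \<le> scaled_potential F U C"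
    if "potential F (U - {a, b}) C' \<le> P + P / (real m - 1)" for C'
  proof -
    have "scaled_potential F (U - {a, b}) C' \<le> (P + P / (real m - 1)) * (real m - 1)"
      unfolding scaled_potential_def card_rest using that m_pos by (intro mult_right_mono) auto
    also have "\<dots> = P * real m" using m_pos by (simp add: field_simps)
    also have "\<dots> \<le> scaled_potential F U C"
      unfolding scaled_potential_def P_def m_def using potential_nonneg by (intro mult_left_mono) auto
    finally show ?thesis .
  qed
  have "potential F (U - {a, b}) (insert a C) \<le> P + (D b - D a) / 2"
    using potential_offer_le[OF ab U(2) F] unfolding P_def D_def .
  then have "scaled_potential F (U - {a, b}) (insert a C) \<le> scaled_potential F U C"
    using close by (intro scaled_le) linarith
  moreover have "potential F (U - {a, b}) (insert b C) \<le> P + (D a - D b) / 2"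
    using potential_offer_le[OF ab(2,1) _ U(2) F] ab(3) unfolding P_def D_def
    by (simp add: insert_commute)
  then have "scaled_potential F (U - {a, b}) (insert b C) \<le> scaled_potential F U C"
    using close by (intro scaled_le) linarith
  ultimately show ?thesis using ab by blast
qed

lemma ln_three_halves_ge: "1/4 \<le> ln (3/2 :: real)"
  using ln_one_plus_pos_lower_bound[of "1/2 :: real"] by (simp add: power2_eq_square)

lemma ln_two_le_one: "ln 2 \<le> (1 :: real)"
  using ln_le_minus_one[of "2 :: real"] by simp

lemma ln_weight_ge: "real w / 4 - real c \<le> ln ((3/2 :: real) ^ w * (1/2) ^ c)"
proof -
  have "ln ((3/2 :: real) ^ w * (1/2) ^ c) = real w * ln (3/2) - real c * ln 2"
    by (simp add: ln_mult ln_realpow ln_div)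
  moreover have "real w * (1/4) \<le> real w * ln (3/2)"
    using ln_three_halves_ge by (intro mult_left_mono) auto
  moreover have "real c * ln 2 \<le> real c"
    using ln_two_le_one by (simp add: mult_left_le)
  ultimately show ?thesis by simp
qed

lemma ln_threshold_le:
  fixes n :: real
  assumes "1 \<le> n"
  shows "ln (n powr ln n * (n + 1)) \<le> ln n * ln n + ln n + 1"
proof -
  have "ln (n + 1) \<le> ln (2 * n)" using assms by (intro ln_mono) auto
  also have "\<dots> = ln 2 + ln n" using assms by (intro ln_mult_pos) auto
  finally have "ln (n + 1) \<le> ln n + 1" using ln_two_le_one by linarith
  moreover have "ln (n powr ln n * (n + 1)) = ln n * ln n + ln (n + 1)"
    using assms by (simp add: ln_mult_pos)
  ultimately show ?thesis by linarith
qed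

lemma threshold_less_weight:
  fixes n k :: real and w c :: nat
  assumes n: "exp 8 \<le> n" and k: "ln n ^ 3 \<le> k"
    and client_few: "real c < k / 100" and total: "k \<le> real w + 1 + real c"
  shows "n powr ln n * (n + 1) < (3/2) ^ w * (1/2) ^ c"
proof -
  define L where "L = ln n"
  have n_ge_1: "1 \<le> n" using n by (rule order_trans[rotated]) simp
  have L: "8 \<le> L" using n n_ge_1 by (simp add: L_def ln_ge_iff)
  have "8 * (L * L) \<le> L * (L * L)" using L by (intro mult_right_mono) auto
  moreover have "8 * L \<le> L * L" using L by (intro mult_right_mono) auto
  moreover have "L * (L * L) \<le> k" using k by (simp add: L_def power3_eq_cube mult.assoc)
  ultimately have "L * L + L + 1 < real w / 4 - real c" using client_few total L by linarith
  then have "ln (n powr ln n * (n + 1)) < ln ((3/2 :: real) ^ w * (1/2) ^ c)"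
    using ln_threshold_le[OF n_ge_1] ln_weight_ge[of w c] unfolding L_def by linarith
  then show ?thesis using n_ge_1 by (simp add: ln_less_cancel_iff)
qed

lemma card_le_waiter_unclaimed_client:
  assumes "finite f" "finite U"
  shows "card f \<le> card (f - U - C) + card U + card (f \<inter> C)"
proof -
  have "card f \<le> card ((f - U - C) \<union> U \<union> (f \<inter> C))"
    using assms by (intro card_mono) auto
  also have "\<dots> \<le> card ((f - U - C) \<union> U) + card (f \<inter> C)" by (rule card_Un_le)
  also have "\<dots> \<le> card (f - U - C) + card U + card (f \<inter> C)" using card_Un_le by simp
  finally show ?thesis .
qed

lemma client_share_if_weight_le_threshold:
  fixes n :: real
  assumes "finite f" "finite U" "card U \<le> 1" "exp 8 \<le> n" "ln n ^ 3 \<le> real (card f)"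
    and "weight U C f \<le> n powr ln n * (n + 1)"
  shows "real (card f) / 100 \<le> real (card (C \<inter> f))"
proof (rule ccontr)
  assume "\<not> ?thesis"
  then have "real (card (f \<inter> C)) < real (card f) / 100" by (simp add: Int_commute)
  moreover have "real (card f) \<le> real (card (f - U - C)) + 1 + real (card (f \<inter> C))"
    using card_le_waiter_unclaimed_client[OF assms(1,2), of C] assms(3) by linarith
  ultimately have "n powr ln n * (n + 1) < weight U C f"
    unfolding weight_def using assms(4,5) by (intro threshold_less_weight) auto
  then show False using assms(6) by simp
qed

theorem lemma6p1:
  shows "\<exists>n0::nat. \<forall>n\<ge>n0. \<forall>(X::nat set) (F::nat set set).
           finite X \<and> card X = n \<and> (\<forall>f\<in>F. f \<subseteq> X)
           \<and> real (card F) \<le> real n powr ln (real n)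
           \<and> (\<forall>f\<in>F. real (card f) \<ge> (ln (real n)) ^ 3)
           \<longrightarrow> waiter_wins (\<lambda>C. \<forall>f\<in>F. real (card (C \<inter> f)) \<ge> real (card f) / 100) X {}"
proof (intro exI[of _ "nat \<lceil>exp (8 :: real)\<rceil>"] allI impI, elim conjE)
  fix n :: nat and X :: "nat set" and F :: "nat set set"
  assume n: "nat \<lceil>exp (8 :: real)\<rceil> \<le> n" and X: "finite X" "card X = n" and FX: "\<forall>f\<in>F. f \<subseteq> X"
    and few_edges: "real (card F) \<le> real n powr ln (real n)"
    and large_edges: "\<forall>f\<in>F. real (card f) \<ge> (ln (real n)) ^ 3"
  define K where "K = real n powr ln (real n) * (real n + 1)"
  have F: "finite F" "\<And>f. f \<in> F \<Longrightarrow> finite f"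
    using FX X(1) by (auto intro: finite_subset[of F "Pow X"] finite_subset)
  show "waiter_wins (\<lambda>C. \<forall>f\<in>F. real (card (C \<inter> f)) \<ge> real (card f) / 100) X {}"
  proof (rule waiter_wins_by_potential[where \<Psi> = "scaled_potential F" and K = K])
    show "\<exists>a\<in>U. \<exists>b\<in>U. a \<noteq> b
            \<and> scaled_potential F (U - {a, b}) (insert a C) \<le> scaled_potential F U C
            \<and> scaled_potential F (U - {a, b}) (insert b C) \<le> scaled_potential F U C"
      if "finite U" "C \<inter> U = {}" "2 \<le> card U" for U C
      using exists_offer_scaled_potential_le[OF F that] .
    show "\<forall>f\<in>F. real (card f) / 100 \<le> real (card (C \<inter> f))"
      if "finite U" "C \<inter> U = {}" "card U \<le> 1" "scaled_potential F U C \<le> K" for U C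
    proof
      fix f assume "f \<in> F"
      have "weight U C f \<le> scaled_potential F U C"
        using weight_le_scaled_potential[OF F(1) \<open>f \<in> F\<close>] .
      then show "real (card f) / 100 \<le> real (card (C \<inter> f))"
        using that n large_edges \<open>f \<in> F\<close> F(2)
        by (intro client_share_if_weight_le_threshold[where n = "real n"]) (auto simp: K_def)
    qed
    show "scaled_potential F X {} \<le> K"
      using few_edges FX by (simp add: scaled_potential_def potential_start K_def X(2))
  qed (use X in auto)
qed

end
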